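(* There exist $p,k,E$ and source covariance matrices $\Sigma_1,\dots,\Sigma_E$ such that every matrix $V^{\mathrm{seq}}=[v_1,\dots,v_k]$ produced by the sequential procedure below fails to solve rank-$k$ minPCA. The sequential procedure chooses orthonormal vectors with $v_1\in\arg\max_{v\in\mathbb{R}^p,\|v\|=1}\min_{e\in\mathcal{E}}\mathcal{L}_{\mathrm{var}}(v;\Sigma_e)$ and, for $2\le j\le k$, $v_j\in\arg\max\{\min_{e\in\mathcal{E}}\mathcal{L}_{\mathrm{var}}([v_1,\dots,v_{j-1},v];\Sigma_e): v\in\mathbb{R}^p,\ \|v\|=1,\ v\perp v_i\ \forall i<j\}$.
   Context: $\mathcal{O}_{p\times k}=\{V\in\mathbb{R}^{p\times k}:V^\top V=I_k\}$; source domains $\mathcal{E}=\{1,\dots,E\}$ with symmetric positive semidefinite covariances $\Sigma_e$ of positive trace. $\mathcal{L}_{\mathrm{var}}(V;\Sigma)=\operatorname{Tr}(V^\top\Sigma V)$ for any $V$ with orthonormal columns. $V^*$ solves rank-$k$ minPCA if $V^*\in\arg\max_{V\in\mathcal{O}_{p\times k}}\min_{e\in\mathcal{E}}\mathcal{L}_{\mathrm{var}}(V;\Sigma_e)$. *)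

theory Defs
  imports "Jordan_Normal_Form.Matrix"
begin

definition mtrace :: "real mat \<Rightarrow> real" where
  "mtrace A = (\<Sum>i<dim_row A. A $$ (i, i))"

definition sym_psd :: "nat \<Rightarrow> real mat \<Rightarrow> bool" where
  "sym_psd p A \<longleftrightarrow> A \<in> carrier_mat p p \<and> transpose_mat A = A \<and>
     (\<forall>x \<in> carrier_vec p. 0 \<le> x \<bullet> (A *\<^sub>v x))"

definition orth_mats :: "nat \<Rightarrow> nat \<Rightarrow> real mat set" where
  "orth_mats p k = {V. V \<in> carrier_mat p k \<and> transpose_mat V * V = 1\<^sub>m k}"

definition L_var :: "real mat \<Rightarrow> real mat \<Rightarrow> real" where
  "L_var V S = mtrace (transpose_mat V * S * V)"

definition min_L :: "nat \<Rightarrow> (nat \<Rightarrow> real mat) \<Rightarrow> real mat \<Rightarrow> real" where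
  "min_L E Sig V = Min ((\<lambda>e. L_var V (Sig e)) ` {1..E})"

definition is_minPCA :: "nat \<Rightarrow> nat \<Rightarrow> nat \<Rightarrow> (nat \<Rightarrow> real mat) \<Rightarrow> real mat \<Rightarrow> bool" where
  "is_minPCA p k E Sig V \<longleftrightarrow> V \<in> orth_mats p k \<and>
     (\<forall>W \<in> orth_mats p k. min_L E Sig W \<le> min_L E Sig V)"

definition seq_cands :: "nat \<Rightarrow> real vec list \<Rightarrow> real vec set" where
  "seq_cands p prev = {v. v \<in> carrier_vec p \<and> v \<bullet> v = 1 \<and> (\<forall>u \<in> set prev. v \<bullet> u = 0)}"

definition is_seq_output :: "nat \<Rightarrow> nat \<Rightarrow> nat \<Rightarrow> (nat \<Rightarrow> real mat) \<Rightarrow> real vec list \<Rightarrow> bool" where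
  "is_seq_output p k E Sig vs \<longleftrightarrow> length vs = k \<and>
     (\<forall>j<k. vs ! j \<in> seq_cands p (take j vs) \<and>
        (\<forall>v \<in> seq_cands p (take j vs).
           min_L E Sig (mat_of_cols p (take j vs @ [v]))
             \<le> min_L E Sig (mat_of_cols p (take (Suc j) vs))))"

end

theory Submission
  imports Defs
begin

text \<open>Take \<open>p = E = 3\<close>, \<open>k = 2\<close> and let \<open>\<Sigma>\<^sub>e\<close> be the projection onto the \<open>e\<close>-th
  coordinate axis, so that the objective is the smallest diagonal entry of \<open>V V\<^sup>T\<close>.
  The vector \<open>(1, 1, 1) / \<surd>3\<close> has value \<open>1/3\<close>, so the first sequential vector \<open>x\<close>
  satisfies \<open>x\<^sub>i\<^sup>2 \<ge> 1/3\<close>, hence \<open>x\<^sub>i\<^sup>2 = 1/3\<close>, for all \<open>i\<close>.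
  An orthonormal basis of \<open>(1, 1, 1)\<^sup>\<bottom>\<close> has value \<open>2/3\<close>, so if \<open>[x, y]\<close> solved
  rank-2 minPCA then \<open>x\<^sub>i\<^sup>2 + y\<^sub>i\<^sup>2 \<ge> 2/3\<close>; as these sum to \<open>2\<close>, also \<open>y\<^sub>i\<^sup>2 = 1/3\<close>.
  Then each \<open>3 x\<^sub>i y\<^sub>i\<close> is \<open>\<plusminus>1\<close>, so \<open>3 \<langle>x, y\<rangle>\<close> is odd, contradicting \<open>x \<perp> y\<close>.\<close>

definition coord_proj :: "nat \<Rightarrow> nat \<Rightarrow> real mat" where
  "coord_proj n d = mat n n (\<lambda>(i, j). if i = d \<and> j = d then 1 else 0)"

lemma coord_proj_carrier [simp]:
  "coord_proj n d \<in> carrier_mat n n" "dim_row (coord_proj n d) = n" "dim_col (coord_proj n d) = n"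
  by (simp_all add: coord_proj_def)

lemma coord_proj_mult_vec:
  assumes "x \<in> carrier_vec n" and "d < n"
  shows "coord_proj n d *\<^sub>v x = vec n (\<lambda>i. if i = d then x $ d else 0)"
  using assms by (auto simp: coord_proj_def mult_mat_vec_def scalar_prod_def row_def
      if_distrib[of "\<lambda>a. a * _"] cong: if_cong)

lemma sym_psd_coord_proj:
  assumes "d < n"
  shows "sym_psd n (coord_proj n d)"
proof -
  have "x \<bullet> (coord_proj n d *\<^sub>v x) = (x $ d)\<^sup>2" if "x \<in> carrier_vec n" for x
    using that assms
    by (simp add: coord_proj_mult_vec scalar_prod_def if_distrib[of "\<lambda>a. _ * a"] power2_eq_square
        cong: if_cong)
  moreover have "transpose_mat (coord_proj n d) = coord_proj n d"
    by (rule eq_matI) (auto simp: coord_proj_def)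
  ultimately show ?thesis
    unfolding sym_psd_def by simp
qed

lemma mtrace_coord_proj: "d < n \<Longrightarrow> mtrace (coord_proj n d) = 1"
  by (simp add: mtrace_def coord_proj_def)

lemma L_var_coord_proj:
  assumes V: "V \<in> carrier_mat n k" and d: "d < n"
  shows "L_var V (coord_proj n d) = (\<Sum>j<k. (V $$ (d, j))\<^sup>2)"
proof -
  have "(transpose_mat V * coord_proj n d * V) $$ (j, j) = (V $$ (d, j))\<^sup>2" if j: "j < k" for j
  proof -
    have row_entry: "(transpose_mat V * coord_proj n d) $$ (j, b) = (if b = d then V $$ (d, j) else 0)"
      if "b < n" for b
      using V j that d
      by (simp add: coord_proj_def scalar_prod_def if_distrib[of "\<lambda>a. _ * a"] cong: if_cong)
    have "(transpose_mat V * coord_proj n d * V) $$ (j, j)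
        = (\<Sum>b<n. (transpose_mat V * coord_proj n d) $$ (j, b) * V $$ (b, j))"
      using V j by (simp add: scalar_prod_def lessThan_atLeast0)
    also have "\<dots> = (\<Sum>b<n. if b = d then V $$ (d, j) * V $$ (b, j) else 0)"
      by (rule sum.cong) (simp_all add: row_entry)
    also have "\<dots> = (V $$ (d, j))\<^sup>2"
      using d by (simp add: power2_eq_square)
    finally show ?thesis .
  qed
  then show ?thesis
    using V unfolding L_var_def mtrace_def by simp
qed

lemma L_var_mat_of_cols_coord_proj:
  "d < n \<Longrightarrow> L_var (mat_of_cols n vs) (coord_proj n d) = (\<Sum>v\<leftarrow>vs. (v $ d)\<^sup>2)"
  by (simp add: L_var_coord_proj[OF mat_of_cols_carrier(1)] mat_of_cols_index sum_list_sum_nth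
      atLeast0LessThan)

lemma min_L_ge_iff:
  "1 \<le> E \<Longrightarrow> c \<le> min_L E Sig V \<longleftrightarrow> (\<forall>e\<in>{1..E}. c \<le> L_var V (Sig e))"
  unfolding min_L_def by simp

lemma gram_mat_of_cols:
  assumes "set vs \<subseteq> carrier_vec n"
  shows "transpose_mat (mat_of_cols n vs) * mat_of_cols n vs
    = mat (length vs) (length vs) (\<lambda>(i, j). vs ! i \<bullet> vs ! j)"
  using assms by (intro eq_matI) (auto simp: row_transpose subsetD)

lemma mat_of_cols_in_orth_mats:
  assumes "set vs \<subseteq> carrier_vec n"
    and "\<And>i j. i < length vs \<Longrightarrow> j < length vs \<Longrightarrow> vs ! i \<bullet> vs ! j = (if i = j then 1 else 0)"
  shows "mat_of_cols n vs \<in> orth_mats n (length vs)"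
  using assms unfolding orth_mats_def by (auto simp: gram_mat_of_cols intro!: eq_matI)

lemma orthonormal_pair_in_orth_mats:
  assumes "x \<in> carrier_vec n" "y \<in> carrier_vec n" "x \<bullet> x = 1" "y \<bullet> y = 1" "x \<bullet> y = (0::real)"
  shows "mat_of_cols n [x, y] \<in> orth_mats n 2"
proof -
  have "[x, y] ! i \<bullet> [x, y] ! j = (if i = j then 1 else 0)" if "i < 2" "j < 2" for i j
    using that assms comm_scalar_prod[of x n y] by (auto simp: less_2_cases_iff)
  then show ?thesis
    using mat_of_cols_in_orth_mats[of "[x, y]" n] assms by (simp add: numeral_2_eq_2)
qed

lemma is_seq_output_nth_cand:
  "is_seq_output p k E Sig vs \<Longrightarrow> j < k \<Longrightarrow> vs ! j \<in> seq_cands p (take j vs)"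
  unfolding is_seq_output_def by blast

lemma is_seq_output_first_optimal:
  assumes "is_seq_output p k E Sig vs" "0 < k" "v \<in> seq_cands p []"
  shows "min_L E Sig (mat_of_cols p [v]) \<le> min_L E Sig (mat_of_cols p [vs ! 0])"
proof -
  have "take (Suc 0) vs = [vs ! 0]"
    using assms(1,2) unfolding is_seq_output_def by (cases vs) auto
  then show ?thesis
    using assms unfolding is_seq_output_def by force
qed

lemma scalar_prod_dim3: "dim_vec y = 3 \<Longrightarrow> x \<bullet> y = x $ 0 * y $ 0 + x $ 1 * y $ 1 + x $ 2 * y $ 2"
  unfolding scalar_prod_def by (simp add: numeral_3_eq_3 numeral_2_eq_2)

lemma orthonormal_pair_not_balanced:
  fixes x y :: "real vec"
  assumes dims: "dim_vec x = 3" "dim_vec y = 3"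
    and unit: "x \<bullet> x = 1" "y \<bullet> y = 1" and orth: "x \<bullet> y = 0"
    and x_bal: "\<forall>d<3. 1/3 \<le> (x $ d)\<^sup>2" and xy_bal: "\<forall>d<3. 2/3 \<le> (x $ d)\<^sup>2 + (y $ d)\<^sup>2"
  shows False
proof -
  have sq_sums: "(x $ 0)\<^sup>2 + (x $ 1)\<^sup>2 + (x $ 2)\<^sup>2 = 1" "(y $ 0)\<^sup>2 + (y $ 1)\<^sup>2 + (y $ 2)\<^sup>2 = 1"
    using unit dims by (simp_all add: scalar_prod_dim3 power2_eq_square)
  have "1/3 \<le> (x $ 0)\<^sup>2" "1/3 \<le> (x $ 1)\<^sup>2" "1/3 \<le> (x $ 2)\<^sup>2"
    "2/3 \<le> (x $ 0)\<^sup>2 + (y $ 0)\<^sup>2" "2/3 \<le> (x $ 1)\<^sup>2 + (y $ 1)\<^sup>2" "2/3 \<le> (x $ 2)\<^sup>2 + (y $ 2)\<^sup>2"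
    using x_bal xy_bal by auto
  then have thirds: "(x $ d)\<^sup>2 = 1/3 \<and> (y $ d)\<^sup>2 = 1/3" if "d < 3" for d
    using that sq_sums by (auto simp: less_Suc_eq numeral_3_eq_3 numeral_2_eq_2)
  have sign: "3 * (x $ d * y $ d) = 1 \<or> 3 * (x $ d * y $ d) = -1" if "d < 3" for d
  proof -
    have "(3 * (x $ d * y $ d))\<^sup>2 = 1"
      using thirds[OF that] by (simp only: power_mult_distrib) simp
    then show ?thesis
      by (simp only: power2_eq_1_iff)
  qed
  have "3 * (x $ 0 * y $ 0) + 3 * (x $ 1 * y $ 1) + 3 * (x $ 2 * y $ 2) = 0"
    using orth dims by (simp add: scalar_prod_dim3)
  \<comment> \<open>a sum of three signs is odd, hence nonzero\<close>
  then show False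
    using sign[of 0] sign[of 1] sign[of 2] by auto
qed

definition axis_cov :: "nat \<Rightarrow> real mat" where
  "axis_cov e = coord_proj 3 (e - 1)"

lemma sym_psd_axis_cov:
  assumes "e \<in> {1..3}"
  shows "sym_psd 3 (axis_cov e) \<and> 0 < mtrace (axis_cov e)"
proof -
  have "e - 1 < 3"
    using assms by auto
  then show ?thesis
    by (simp add: axis_cov_def sym_psd_coord_proj mtrace_coord_proj)
qed

lemma min_L_axis_cov_ge_iff:
  "c \<le> min_L 3 axis_cov (mat_of_cols 3 vs) \<longleftrightarrow> (\<forall>d<3. c \<le> (\<Sum>v\<leftarrow>vs. (v $ d)\<^sup>2))"
proof -
  have "(\<forall>e\<in>{1..3}. c \<le> L_var (mat_of_cols 3 vs) (axis_cov e))
      \<longleftrightarrow> (\<forall>d<3. c \<le> L_var (mat_of_cols 3 vs) (axis_cov (Suc d)))"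
    unfolding image_Suc_lessThan[symmetric] by blast
  then show ?thesis
    by (simp add: min_L_ge_iff axis_cov_def L_var_mat_of_cols_coord_proj)
qed

lemma seq_output_axis_cov_first_balanced:
  assumes "is_seq_output 3 k 3 axis_cov vs" "0 < k" "d < 3"
  shows "1/3 \<le> (vs ! 0 $ d)\<^sup>2"
proof -
  define u :: "real vec" where "u = vec 3 (\<lambda>_. 1 / sqrt 3)"
  have u_sq: "(u $ i)\<^sup>2 = 1/3" if "i < 3" for i
    using that by (simp add: u_def power_divide)
  have "u \<bullet> u = 1"
    using u_sq[of 0] u_sq[of 1] u_sq[of 2] by (simp add: u_def scalar_prod_dim3 power2_eq_square)
  then have "u \<in> seq_cands 3 []"
    by (simp add: seq_cands_def u_def)
  moreover have "1/3 \<le> min_L 3 axis_cov (mat_of_cols 3 [u])"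
    by (simp add: min_L_axis_cov_ge_iff u_sq)
  ultimately have "1/3 \<le> min_L 3 axis_cov (mat_of_cols 3 [vs ! 0])"
    using is_seq_output_first_optimal[OF assms(1,2)] order_trans by blast
  then show ?thesis
    using assms(3) by (simp add: min_L_axis_cov_ge_iff)
qed

lemma minPCA_axis_cov_balanced:
  assumes "is_minPCA 3 2 3 axis_cov (mat_of_cols 3 [x, y])" "d < 3"
  shows "2/3 \<le> (x $ d)\<^sup>2 + (y $ d)\<^sup>2"
proof -
  define a b :: real where "a = 1 / sqrt 2" and "b = 1 / sqrt 6"
  \<comment> \<open>an orthonormal basis of the orthogonal complement of \<open>(1, 1, 1)\<close>\<close>
  define w1 w2 :: "real vec" where "w1 = vec_of_list [a, -a, 0]" and "w2 = vec_of_list [b, b, -2 * b]"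
  have a2: "a\<^sup>2 = 1/2" and b2: "b\<^sup>2 = 1/6"
    by (simp_all add: a_def b_def power_divide)
  have w: "dim_vec w1 = 3" "w1 $ 0 = a" "w1 $ 1 = -a" "w1 $ 2 = 0"
    "dim_vec w2 = 3" "w2 $ 0 = b" "w2 $ 1 = b" "w2 $ 2 = -2 * b"
    by (simp_all only: w1_def w2_def vec_of_list_index dim_vec_of_list) simp_all
  have "w1 \<bullet> w1 = 1" "w2 \<bullet> w2 = 1" "w1 \<bullet> w2 = 0"
    using a2 b2 by (simp_all only: scalar_prod_dim3 w) (simp_all add: power2_eq_square)
  then have "mat_of_cols 3 [w1, w2] \<in> orth_mats 3 2"
    using w by (intro orthonormal_pair_in_orth_mats carrier_vecI)
  moreover have "2/3 \<le> (w1 $ i)\<^sup>2 + (w2 $ i)\<^sup>2" if "i < 3" for i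
  proof -
    have "i = 0 \<or> i = 1 \<or> i = 2"
      using that by auto
    then show ?thesis
      using a2 b2 w by (auto simp: power_mult_distrib)
  qed
  then have "2/3 \<le> min_L 3 axis_cov (mat_of_cols 3 [w1, w2])"
    by (simp add: min_L_axis_cov_ge_iff)
  ultimately have "2/3 \<le> min_L 3 axis_cov (mat_of_cols 3 [x, y])"
    using assms(1) unfolding is_minPCA_def by (meson order_trans)
  then show ?thesis
    using assms(2) by (simp add: min_L_axis_cov_ge_iff)
qed

theorem mainTheorem4:
  shows "\<exists>(p::nat) (k::nat) (E::nat) (Sig :: nat \<Rightarrow> real mat).
     1 \<le> k \<and> k \<le> p \<and> 1 \<le> E \<and>
     (\<forall>e\<in>{1..E}. sym_psd p (Sig e) \<and> 0 < mtrace (Sig e)) \<and>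
     (\<forall>vs. is_seq_output p k E Sig vs \<longrightarrow> \<not> is_minPCA p k E Sig (mat_of_cols p vs))"
proof -
  have "\<not> is_minPCA 3 2 3 axis_cov (mat_of_cols 3 vs)" if seq: "is_seq_output 3 2 3 axis_cov vs" for vs
  proof
    assume opt: "is_minPCA 3 2 3 axis_cov (mat_of_cols 3 vs)"
    obtain x y where vs: "vs = [x, y]"
      using seq unfolding is_seq_output_def by (auto simp: numeral_2_eq_2 length_Suc_conv)
    have "x \<in> seq_cands 3 []" "y \<in> seq_cands 3 [x]"
      using is_seq_output_nth_cand[OF seq, of 0] is_seq_output_nth_cand[OF seq, of 1] vs by simp_all
    then have "dim_vec x = 3" "dim_vec y = 3" "x \<bullet> x = 1" "y \<bullet> y = 1" "x \<bullet> y = 0"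
      using comm_scalar_prod[of x 3 y] by (auto simp: seq_cands_def)
    moreover have "\<forall>d<3. 1/3 \<le> (x $ d)\<^sup>2"
      using seq_output_axis_cov_first_balanced[OF seq] vs by simp
    moreover have "\<forall>d<3. 2/3 \<le> (x $ d)\<^sup>2 + (y $ d)\<^sup>2"
      using minPCA_axis_cov_balanced opt vs by simp
    ultimately show False
      by (rule orthonormal_pair_not_balanced)
  qed
  then show ?thesis
    using sym_psd_axis_cov by (intro exI[of _ 3] exI[of _ 2] exI[of _ axis_cov]) auto
qed

end
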